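(* Let $G=(V,E)$ be a graph and $\mathbb{F}$ a field. Suppose there exist a proper coloring $c:V\to[m]$ of $G$ and vectors $u_1,\dots,u_m\in\mathbb{F}^t$ such that for every $v\in V$ the vectors $\{u_{c(v')}: v'\in\{v\}\cup N(v)\}$ (indexed by the colors appearing in the closed neighborhood of $v$) are linearly independent over $\mathbb{F}$. Then $\mathrm{minrk}_{\mathbb{F}}(\overline{G})\le t$.
   Context: $\overline{G}$ denotes the complement of $G$, and $N(v)$ the neighborhood of $v$. For a graph $H$ on vertex set $[n]$, a matrix $M\in\mathbb{F}^{n\times n}$ represents $H$ if $M_{i,i}\ne0$ for all $i$ and $M_{i,j}=0$ for all distinct non-adjacent $i,j$. The minrank $\mathrm{minrk}_{\mathbb{F}}(H)$ is the minimum rank over $\mathbb{F}$ of a matrix representing $H$. *)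

theory Defs
  imports "Jordan_Normal_Form.DL_Rank"
begin

definition simple_graph :: "nat \<Rightarrow> (nat \<Rightarrow> nat \<Rightarrow> bool) \<Rightarrow> bool" where
  "simple_graph n E \<longleftrightarrow> (\<forall>i<n. \<forall>j<n. E i j \<longleftrightarrow> E j i) \<and> (\<forall>i<n. \<not> E i i)"

definition graph_compl :: "(nat \<Rightarrow> nat \<Rightarrow> bool) \<Rightarrow> nat \<Rightarrow> nat \<Rightarrow> bool" where
  "graph_compl E i j \<longleftrightarrow> i \<noteq> j \<and> \<not> E i j"

definition nbhd :: "nat \<Rightarrow> (nat \<Rightarrow> nat \<Rightarrow> bool) \<Rightarrow> nat \<Rightarrow> nat set" where
  "nbhd n E v = {w. w < n \<and> E v w}"

definition represents :: "nat \<Rightarrow> (nat \<Rightarrow> nat \<Rightarrow> bool) \<Rightarrow> 'f::field mat \<Rightarrow> bool" where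
  "represents n H M \<longleftrightarrow> M \<in> carrier_mat n n \<and> (\<forall>i<n. M $$ (i,i) \<noteq> 0)
     \<and> (\<forall>i<n. \<forall>j<n. i \<noteq> j \<and> \<not> H i j \<longrightarrow> M $$ (i,j) = 0)"

definition minrk :: "'f::field itself \<Rightarrow> nat \<Rightarrow> (nat \<Rightarrow> nat \<Rightarrow> bool) \<Rightarrow> nat" where
  "minrk F n H = (LEAST r. \<exists>M::'f mat. represents n H M \<and> vec_space.rank n M = r)"

definition lin_indep_family :: "nat \<Rightarrow> (nat \<Rightarrow> 'f::field vec) \<Rightarrow> nat set \<Rightarrow> bool" where
  "lin_indep_family t u C \<longleftrightarrow>
     (\<forall>a::nat \<Rightarrow> 'f. (\<forall>k<t. (\<Sum>i\<in>C. a i * (u i $ k)) = 0) \<longrightarrow> (\<forall>i\<in>C. a i = 0))"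

end

theory Submission
  imports Defs
begin

text \<open>For each vertex v, independence of the colour vectors on the closed neighbourhood
  of v yields a linear functional x_v taking the value 1 on u_c(v) and vanishing on the colour
  vectors of all neighbours, which differ from u_c(v) because the colouring is proper.
  The matrix M(v,w) = x_v(u_c(w)) then represents the complement of G, and it is the product
  of an n \<times> t and a t \<times> n matrix, so its rank is at most t.\<close>

definition pairing :: "nat \<Rightarrow> (nat \<Rightarrow> 'f::field) \<Rightarrow> 'f vec \<Rightarrow> 'f" where
  "pairing t x v = (\<Sum>k<t. x k * v $ k)"

lemma pairing_add_scale: "pairing t (\<lambda>s. x s + l * z s) v = pairing t x v + l * pairing t z v"
  unfolding pairing_def by (simp add: algebra_simps sum.distrib sum_distrib_left)

lemma lin_indep_family_subset:
  assumes "lin_indep_family t u D" "C \<subseteq> D" "finite D"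
  shows "lin_indep_family t u C"
  unfolding lin_indep_family_def
proof (intro allI impI ballI)
  fix a i assume rel: "\<forall>k<t. (\<Sum>i\<in>C. a i * u i $ k) = 0" and "i \<in> C"
  define a' where "a' i = (if i \<in> C then a i else 0)" for i
  have "(\<Sum>i\<in>D. a' i * u i $ k) = (\<Sum>i\<in>C. a i * u i $ k)" for k
    using assms(2,3) by (intro sum.mono_neutral_cong_right) (auto simp: a'_def)
  then have "\<forall>i\<in>D. a' i = 0"
    using assms(1) rel unfolding lin_indep_family_def by metis
  then have "a' i = 0" using \<open>i \<in> C\<close> assms(2) by blast
  then show "a i = 0" using \<open>i \<in> C\<close> by (simp add: a'_def)
qed

lemma pairing_coordinate_residual:
  assumes "k < t"
  shows "pairing t (\<lambda>s. (if s = k then 1 else 0) - (\<Sum>i\<in>C. u i $ k * y i s)) v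
           = v $ k - (\<Sum>i\<in>C. u i $ k * pairing t (y i) v)"
proof -
  have "(\<Sum>s<t. (if s = k then 1 else 0) * v $ s) = v $ k"
    using assms by (simp add: if_distrib[of "\<lambda>x. x * _"] cong: if_cong)
  moreover have "(\<Sum>s<t. (\<Sum>i\<in>C. u i $ k * y i s) * v $ s) = (\<Sum>i\<in>C. u i $ k * pairing t (y i) v)"
    unfolding pairing_def
    by (simp add: sum_distrib_left sum_distrib_right sum.swap[of _ C] algebra_simps)
  ultimately show ?thesis
    unfolding pairing_def by (simp add: algebra_simps sum_subtractf)
qed

text \<open>The functionals z_k = e_k - \<Sum>_i u_i(k) y_i vanish on the u_i, i \<in> C. If they all
  vanished on u_j too, then u_j = \<Sum>_i y_i(u_j) u_i, contradicting independence.\<close>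

lemma separating_functional_exists:
  assumes "finite C" "j \<notin> C" "lin_indep_family t u (insert j C)"
    and dual: "\<And>i l. l \<in> C \<Longrightarrow> pairing t (y i) (u l) = (if l = i then 1 else 0)"
  shows "\<exists>z. (\<forall>l\<in>C. pairing t z (u l) = 0) \<and> pairing t z (u j) \<noteq> 0"
proof -
  define z where "z k = (\<lambda>s. (if s = k then 1 else 0) - (\<Sum>i\<in>C. u i $ k * y i s))" for k
  have z: "pairing t (z k) v = v $ k - (\<Sum>i\<in>C. u i $ k * pairing t (y i) v)" if "k < t" for k v
    unfolding z_def using pairing_coordinate_residual[OF that] .
  have z_C: "pairing t (z k) (u l) = 0" if "k < t" "l \<in> C" for k l
  proof -
    have "(\<Sum>i\<in>C. u i $ k * pairing t (y i) (u l)) = (\<Sum>i\<in>C. if i = l then u i $ k else 0)"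
      by (rule sum.cong) (auto simp: dual that)
    then show ?thesis using z[OF that(1)] that(2) assms(1) by (simp add: sum.delta')
  qed
  have "\<exists>k<t. pairing t (z k) (u j) \<noteq> 0"
  proof (rule ccontr)
    assume z_j: "\<not> (\<exists>k<t. pairing t (z k) (u j) \<noteq> 0)"
    define a where "a i = (if i = j then -1 else pairing t (y i) (u j))" for i
    have "(\<Sum>i\<in>insert j C. a i * u i $ k) = 0" if "k < t" for k
    proof -
      have "(\<Sum>i\<in>C. a i * u i $ k) = (\<Sum>i\<in>C. u i $ k * pairing t (y i) (u j))"
        using assms(2) by (intro sum.cong) (auto simp: a_def)
      then show ?thesis
        using z[OF that, of "u j"] z_j that assms(1,2) by (simp add: a_def)
    qed
    then have "a j = 0" using assms(3) unfolding lin_indep_family_def by blast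
    then show False by (simp add: a_def)
  qed
  then show ?thesis using z_C by blast
qed

lemma lin_indep_family_interpolation:
  assumes "finite C" "lin_indep_family t u C"
  shows "\<exists>x. \<forall>i\<in>C. pairing t x (u i) = b i"
  using assms
proof (induction C arbitrary: b rule: finite_induct)
  case empty
  then show ?case by simp
next
  case (insert j C)
  have indep: "lin_indep_family t u C"
    using lin_indep_family_subset insert by blast
  have "\<exists>y. \<forall>l\<in>C. pairing t y (u l) = (if l = i then 1 else 0)" for i
    using insert.IH[OF indep] .
  then obtain y where "\<And>i l. l \<in> C \<Longrightarrow> pairing t (y i) (u l) = (if l = i then 1 else 0)"
    by metis
  then obtain z where z: "\<forall>l\<in>C. pairing t z (u l) = 0" "pairing t z (u j) \<noteq> 0"
    using separating_functional_exists[OF insert.hyps(1,2) insert.prems] by blast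
  obtain x0 where x0: "\<forall>l\<in>C. pairing t x0 (u l) = b l"
    using insert.IH[OF indep] by blast
  define l where "l = (b j - pairing t x0 (u j)) / pairing t z (u j)"
  have "\<forall>i\<in>insert j C. pairing t (\<lambda>s. x0 s + l * z s) (u i) = b i"
    using z x0 unfolding pairing_add_scale by (auto simp: l_def)
  then show ?case by blast
qed

lemma rank_mat_sum_products_le:
  fixes X :: "nat \<Rightarrow> nat \<Rightarrow> 'f::field" and Y :: "nat \<Rightarrow> nat \<Rightarrow> 'f"
  shows "vec_space.rank n (mat n n (\<lambda>(v,w). \<Sum>k<s. X v k * Y k w)) \<le> s"
proof (induction s)
  case 0
  have "mat n n (\<lambda>(v,w). \<Sum>k<0. X v k * Y k w) = (0\<^sub>m n n :: 'f mat)"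
    by (rule eq_matI) auto
  then show ?case using vec_space.rank_0I[of n n] by (simp add: zero_mat_def)
next
  case (Suc s)
  let ?A = "mat n n (\<lambda>(v,w). \<Sum>k<s. X v k * Y k w)"
  let ?B = "mat n n (\<lambda>(v,w). X v s * Y s w)"
  have "mat n n (\<lambda>(v,w). \<Sum>k<Suc s. X v k * Y k w) = ?A + ?B"
    by (rule eq_matI) auto
  moreover have "vec_space.rank n (?A + ?B) \<le> vec_space.rank n ?A + vec_space.rank n ?B"
    by (rule vec_space.rank_subadditive) auto
  moreover have "vec_space.rank n ?B \<le> 1"
    by (rule vec_space.rank_le_1_product_entries[of _ n n "\<lambda>r. X r s" "\<lambda>c. Y s c"]) auto
  ultimately show ?case using Suc.IH by simp
qed

lemma minrk_le_rank:
  fixes M :: "'f::field mat"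
  assumes "represents n H M"
  shows "minrk TYPE('f) n H \<le> vec_space.rank n M"
  unfolding minrk_def by (rule Least_le) (use assms in blast)

theorem mainTheorem9:
  fixes n m t :: nat and E :: "nat \<Rightarrow> nat \<Rightarrow> bool"
    and c :: "nat \<Rightarrow> nat" and u :: "nat \<Rightarrow> 'f::field vec"
  assumes "simple_graph n E"
    and "\<forall>v<n. c v < m"
    and "\<forall>v<n. \<forall>w<n. E v w \<longrightarrow> c v \<noteq> c w"
    and "\<forall>i<m. u i \<in> carrier_vec t"
    and "\<forall>v<n. lin_indep_family t u (c ` ({v} \<union> nbhd n E v))"
  shows "minrk TYPE('f) n (graph_compl E) \<le> t"
proof -
  have "\<forall>v. \<exists>x. v < n \<longrightarrow>
      (\<forall>i\<in>c ` ({v} \<union> nbhd n E v). pairing t x (u i) = (if i = c v then 1 else 0))"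
  proof (intro allI)
    fix v
    let ?C = "c ` ({v} \<union> nbhd n E v)"
    have "finite ?C" by (simp add: nbhd_def)
    then have "v < n \<Longrightarrow> \<exists>x. \<forall>i\<in>?C. pairing t x (u i) = (if i = c v then 1 else 0)"
      using assms(5) by (intro lin_indep_family_interpolation) auto
    then show "\<exists>x. v < n \<longrightarrow> (\<forall>i\<in>?C. pairing t x (u i) = (if i = c v then 1 else 0))"
      by blast
  qed
  then obtain X where X: "\<And>v i. v < n \<Longrightarrow> i \<in> c ` ({v} \<union> nbhd n E v) \<Longrightarrow>
      pairing t (X v) (u i) = (if i = c v then 1 else 0)"
    by metis
  define M :: "'f mat" where "M = mat n n (\<lambda>(v,w). \<Sum>k<t. X v k * u (c w) $ k)"
  have "represents n (graph_compl E) M"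
    unfolding represents_def
  proof (intro conjI allI impI)
    fix v w assume "v < n" "w < n" "v \<noteq> w \<and> \<not> graph_compl E v w"
    then have "E v w" "c v \<noteq> c w"
      using assms(3) unfolding graph_compl_def by auto
    then show "M $$ (v, w) = 0"
      using X[of v "c w"] \<open>v < n\<close> \<open>w < n\<close> by (simp add: M_def pairing_def nbhd_def)
  qed (use X in \<open>auto simp: M_def pairing_def\<close>)
  then have "minrk TYPE('f) n (graph_compl E) \<le> vec_space.rank n M"
    by (rule minrk_le_rank)
  also have "\<dots> \<le> t"
    unfolding M_def by (rule rank_mat_sum_products_le)
  finally show ?thesis .
qed

end
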